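(* Let $\langle X\mid R\rangle$ be a side-confluent $N$-homogeneous presentation with $X$ a finite totally ordered set, and let $n\geq0$. Let $h'_n:\bigoplus_{m\geq l_N(n)}V^{\otimes m}\to T(V)$ be the linear map whose restriction to $V^{\otimes m}$ is the left bound $\varphi^{P_{n,m}}(\gamma_1)$ of $P_{n,m}$. Then the image of $h'_n$ is included in $\mathrm{im}(\phi)\otimes J_{n+1}$.
   Context: $\mathbb{K}$ is a field, $N\geq2$, $X^{(m)}$ words of length $m$, $V=\mathbb{K}X$, $V^{\otimes m}=\mathbb{K}X^{(m)}$, $T(V)$ the free algebra (tensor products of subspaces of $T(V)$ are viewed in $T(V)$ via concatenation). $R\subset V^{\otimes N}$, $\overline R=\mathrm{span}(R)$, $I(R)_j=0$ ($j<N$), $I(R)_j=\sum_{i=0}^{j-N}V^{\otimes i}\otimes\overline R\otimes V^{\otimes j-N-i}$ ($j\geq N$). $X^{(m)}$ lexicographically ordered, $\mathrm{lm}(f)$ greatest word in $f\neq0$. Conventions: leading coefficients in $R$ are $1$; a word is a normal form if it has no factor $\mathrm{lm}(f)$, $f\in R$, an element is a normal form if it is a combination of such words; the presentation is reduced. $S(\mathrm{lm}(f))=\mathrm{lm}(f)-f$ ($f\in R$), $S(w)=w$ otherwise; $\langle t,s\rangle^k=\cdots sts$ ($k$ factors, rightmost $s$); side-confluent: for each $1\leq m\leq N-1$ some $k$ gives $\langle\mathrm{id}_{V^{\otimes m}}\otimes S,S\otimes\mathrm{id}_{V^{\otimes m}}\rangle^k=\langle S\otimes\mathrm{id}_{V^{\otimes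 m}},\mathrm{id}_{V^{\otimes m}}\otimes S\rangle^k$. Then every $f$ has a unique normal form $\widehat f$ reachable by reductions; $\phi:T(V)\to T(V)$, $f\mapsto\widehat f$. $l_N(2k)=kN$, $l_N(2k+1)=kN+1$; $J_1=V$, $J_2=\overline R$, $J_n=\bigcap_{i=0}^{l_N(n)-N}V^{\otimes i}\otimes\overline R\otimes V^{\otimes l_N(n)-N-i}$ ($n\geq3$). A reduction operator relatively to $X^{(m)}$ is a linear projector $T$ of $V^{\otimes m}$ with each $T(w)$ equal to $w$ or a combination of words $<w$; the unique one with kernel $W$ is $\theta_{X^{(m)}}^{-1}(W)$. For $m\geq l_N(n)$: $F_1^{n,m}=\theta_{X^{(m)}}^{-1}(I(R)_{m-l_N(n)}\otimes V^{\otimes l_N(n)})$, $F_2^{n,m}=\mathrm{id}$ if $m<l_N(n+1)$, else $\theta_{X^{(m)}}^{-1}(V^{\otimes m-l_N(n+1)}\otimes J_{n+1})$; $P_{n,m}=(F_1^{n,m},F_2^{n,m})$, which is confluent under the hypotheses; fix $k$ with $\langle F_1^{n,m},F_2^{n,m}\rangle^k=\langle F_2^{n,m},F_1^{n,m}\rangle^k$. $\mathcal{A}_k$ is the algebra on $s_1,s_2$ with relations $s_i^2=s_i$, $\langle s_1,s_2\rangle^k=\langle s_2,s_1\rangle^k$; $\gamma_1=(1-s_2)\sum_{i\in I}\langle s_2,s_1\rangle^i$ with $I$ the odd integers in $[1,k-1]$; $\varphi^{P_{n,m}}:\mathcal{A}_k\to\mathrm{End}(V^{\otimes m})$, $s_i\mapsto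 F_i^{n,m}$. *)

theory Defs
  imports Main "HOL-Library.Function_Algebras"
begin

text \<open>Elements of T(V) are functions from words (lists over the finite totally
ordered alphabet 'x) to the field 'k; the coefficient of the word w is v w.
Sums are pointwise (Function_Algebras).\<close>

type_synonym ('x, 'k) vec = "'x list \<Rightarrow> 'k"

definition smul :: "'k::field \<Rightarrow> ('x, 'k) vec \<Rightarrow> ('x, 'k) vec" where
  "smul c v = (\<lambda>w. c * v w)"

definition wvec :: "'x list \<Rightarrow> ('x, 'k::field) vec" where
  "wvec u = (\<lambda>w. if w = u then 1 else 0)"

definition cmul :: "('x, 'k::field) vec \<Rightarrow> ('x, 'k) vec \<Rightarrow> ('x, 'k) vec" where
  "cmul a b = (\<lambda>w. \<Sum>i\<le>length w. a (take i w) * b (drop i w))"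

definition lin_span :: "('x, 'k::field) vec set \<Rightarrow> ('x, 'k) vec set" where
  "lin_span S = {v. \<exists>F c. finite F \<and> F \<subseteq> S \<and> v = (\<Sum>u\<in>F. smul (c u) u)}"

definition TV :: "('x, 'k::field) vec set" where
  "TV = {v. finite {w. v w \<noteq> 0}}"

definition Vpow :: "nat \<Rightarrow> ('x, 'k::field) vec set" where
  "Vpow m = lin_span {wvec w | w. length w = m}"

text \<open>Tensor product of subspaces viewed in T(V) via concatenation.\<close>
definition tens :: "('x, 'k::field) vec set \<Rightarrow> ('x, 'k) vec set \<Rightarrow> ('x, 'k) vec set" where
  "tens A B = lin_span {cmul a b | a b. a \<in> A \<and> b \<in> B}"

definition deg_comp :: "nat \<Rightarrow> ('x, 'k::field) vec \<Rightarrow> ('x, 'k) vec" where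
  "deg_comp m v = (\<lambda>w. if length w = m then v w else 0)"

text \<open>Lexicographic order on words (used on words of equal length).\<close>
definition wless :: "'x::linorder list \<Rightarrow> 'x list \<Rightarrow> bool" where
  "wless u w \<longleftrightarrow> (u, w) \<in> lexord {(a, b). a < b}"

definition lm :: "('x::linorder, 'k::field) vec \<Rightarrow> 'x list" where
  "lm f = (THE w. f w \<noteq> 0 \<and> (\<forall>u. f u \<noteq> 0 \<longrightarrow> u = w \<or> wless u w))"

definition Rbar :: "('x, 'k::field) vec set \<Rightarrow> ('x, 'k) vec set" where
  "Rbar R = lin_span R"

definition IR :: "nat \<Rightarrow> ('x, 'k::field) vec set \<Rightarrow> nat \<Rightarrow> ('x, 'k) vec set" where
  "IR N R j = (if j < N then {0} else
     lin_span (\<Union>i\<in>{0..j - N}. tens (tens (Vpow i) (Rbar R)) (Vpow (j - N - i))))"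

definition normal_word :: "('x::linorder, 'k::field) vec set \<Rightarrow> 'x list \<Rightarrow> bool" where
  "normal_word R w \<longleftrightarrow> (\<forall>f\<in>R. \<not> (\<exists>u v. w = u @ lm f @ v))"

definition normal_elem :: "('x::linorder, 'k::field) vec set \<Rightarrow> ('x, 'k) vec \<Rightarrow> bool" where
  "normal_elem R g \<longleftrightarrow> (\<forall>w. g w \<noteq> 0 \<longrightarrow> normal_word R w)"

definition reduced_pres :: "nat \<Rightarrow> ('x::linorder, 'k::field) vec set \<Rightarrow> bool" where
  "reduced_pres N R \<longleftrightarrow>
     R \<subseteq> Vpow N \<and>
     (\<forall>f\<in>R. f \<noteq> 0 \<and> f (lm f) = 1) \<and>
     (\<forall>f\<in>R. \<forall>g\<in>R. lm f = lm g \<longrightarrow> f = g) \<and>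
     (\<forall>f\<in>R. \<forall>w. w \<noteq> lm f \<and> f w \<noteq> 0 \<longrightarrow> normal_word R w)"

text \<open>The operator S on V^{\<otimes>N}: S(lm f) = lm f - f, S(w) = w otherwise (linear).\<close>
definition Sop :: "('x::linorder, 'k::field) vec set \<Rightarrow> ('x, 'k) vec \<Rightarrow> ('x, 'k) vec" where
  "Sop R g = g - (\<Sum>f\<in>R. smul (g (lm f)) f)"

text \<open>Tensor product A \<otimes> B of operators, acting on V^{\<otimes>(p+q)}, A on the first p letters.\<close>
definition tens_op :: "nat \<Rightarrow> nat \<Rightarrow> (('x::finite, 'k::field) vec \<Rightarrow> ('x, 'k) vec)
     \<Rightarrow> (('x, 'k) vec \<Rightarrow> ('x, 'k) vec) \<Rightarrow> ('x, 'k) vec \<Rightarrow> ('x, 'k) vec" where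
  "tens_op p q A B g = (\<Sum>w\<in>{w. length w = p + q}.
       smul (g w) (cmul (A (wvec (take p w))) (B (wvec (drop p w)))))"

text \<open>alt t s k = <t,s>^k = ... s t s (k factors, rightmost s).\<close>
fun alt :: "('a \<Rightarrow> 'a) \<Rightarrow> ('a \<Rightarrow> 'a) \<Rightarrow> nat \<Rightarrow> 'a \<Rightarrow> 'a" where
  "alt t s 0 = id"
| "alt t s (Suc k) = alt s t k \<circ> s"

definition side_confluent :: "nat \<Rightarrow> ('x::{finite,linorder}, 'k::field) vec set \<Rightarrow> bool" where
  "side_confluent N R \<longleftrightarrow>
     (\<forall>m. 1 \<le> m \<and> m \<le> N - 1 \<longrightarrow> (\<exists>k. \<forall>g\<in>Vpow (N + m).
        alt (tens_op m N id (Sop R)) (tens_op N m (Sop R) id) k g =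
        alt (tens_op N m (Sop R) id) (tens_op m N id (Sop R)) k g))"

definition reduction_step :: "('x::linorder, 'k::field) vec set \<Rightarrow> ('x, 'k) vec \<Rightarrow> ('x, 'k) vec \<Rightarrow> bool" where
  "reduction_step R g h \<longleftrightarrow> (\<exists>u f v. f \<in> R \<and>
       h = g - smul (g (u @ lm f @ v)) (cmul (cmul (wvec u) f) (wvec v)))"

definition nf :: "('x::linorder, 'k::field) vec set \<Rightarrow> ('x, 'k) vec \<Rightarrow> ('x, 'k) vec" where
  "nf R f = (THE g. normal_elem R g \<and> (reduction_step R)\<^sup>*\<^sup>* f g)"

definition lN :: "nat \<Rightarrow> nat \<Rightarrow> nat" where
  "lN N n = (if even n then (n div 2) * N else (n div 2) * N + 1)"

text \<open>J_n (n \<ge> 1; J_0 is not used and set to V^{\<otimes>0}).\<close>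
definition J :: "nat \<Rightarrow> ('x, 'k::field) vec set \<Rightarrow> nat \<Rightarrow> ('x, 'k) vec set" where
  "J N R n = (if n = 0 then Vpow 0 else if n = 1 then Vpow 1 else if n = 2 then Rbar R else
     (\<Inter>i\<in>{0..lN N n - N}. tens (tens (Vpow i) (Rbar R)) (Vpow (lN N n - N - i))))"

text \<open>Reduction operators relatively to X^{(m)}; an operator on V^{\<otimes>m} is encoded as a
map on T(V) depending only on the degree-m component.\<close>
definition red_op :: "nat \<Rightarrow> (('x::linorder, 'k::field) vec \<Rightarrow> ('x, 'k) vec) \<Rightarrow> bool" where
  "red_op m T \<longleftrightarrow>
     (\<forall>v. T v = T (deg_comp m v)) \<and>
     (\<forall>u\<in>Vpow m. \<forall>v\<in>Vpow m. \<forall>a b. T (smul a u + smul b v) = smul a (T u) + smul b (T v)) \<and>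
     (\<forall>v\<in>Vpow m. T v \<in> Vpow m \<and> T (T v) = T v) \<and>
     (\<forall>w. length w = m \<longrightarrow> T (wvec w) = wvec w \<or>
        T (wvec w) \<in> lin_span {wvec u | u. length u = m \<and> wless u w})"

definition theta_inv :: "nat \<Rightarrow> ('x::linorder, 'k::field) vec set \<Rightarrow> ('x, 'k) vec \<Rightarrow> ('x, 'k) vec" where
  "theta_inv m W = (THE T. red_op m T \<and> {v \<in> Vpow m. T v = 0} = W)"

definition F1 :: "nat \<Rightarrow> ('x::linorder, 'k::field) vec set \<Rightarrow> nat \<Rightarrow> nat \<Rightarrow> ('x, 'k) vec \<Rightarrow> ('x, 'k) vec" where
  "F1 N R n m = theta_inv m (tens (IR N R (m - lN N n)) (Vpow (lN N n)))"

definition F2 :: "nat \<Rightarrow> ('x::linorder, 'k::field) vec set \<Rightarrow> nat \<Rightarrow> nat \<Rightarrow> ('x, 'k) vec \<Rightarrow> ('x, 'k) vec" where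
  "F2 N R n m = (if m < lN N (n + 1) then id
     else theta_inv m (tens (Vpow (m - lN N (n + 1))) (J N R (n + 1))))"

definition gamma1 :: "nat \<Rightarrow> ('x::linorder, 'k::field) vec set \<Rightarrow> nat \<Rightarrow> nat \<Rightarrow> nat \<Rightarrow> ('x, 'k) vec \<Rightarrow> ('x, 'k) vec" where
  "gamma1 N R n m k g =
     (let A = (\<Sum>i\<in>{i. odd i \<and> 1 \<le> i \<and> i \<le> k - 1}. alt (F2 N R n m) (F1 N R n m) i g)
      in A - F2 N R n m A)"

text \<open>h'_n on \<oplus>_{m \<ge> l_N(n)} V^{\<otimes>m}, with ks m the fixed integer k for P_{n,m}.\<close>
definition h' :: "nat \<Rightarrow> ('x::linorder, 'k::field) vec set \<Rightarrow> nat \<Rightarrow> (nat \<Rightarrow> nat) \<Rightarrow> ('x, 'k) vec \<Rightarrow> ('x, 'k) vec" where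
  "h' N R n ks f = (\<Sum>m\<in>{m. lN N n \<le> m \<and> (\<exists>w. length w = m \<and> f w \<noteq> 0)}.
       gamma1 N R n m (ks m) (deg_comp m f))"

end

theory Submission
  imports Defs "HOL-Library.List_Lexorder"
begin

text \<open>
For m \<ge> l_N(n+1) both F1 and F2 are reduction operators, hence (by uniqueness of a reduction
operator with given kernel) the projections onto the span of the words that are not leading
words of their kernels W1 = I(R)_{m-l_N(n)} \<otimes> V^{l_N(n)} and W2 = V^{a} \<otimes> J_{n+1},
a = m - l_N(n+1). Every odd alternating product ends with F1, so the element A to which 1 - F2
is applied in \<gamma>_1 has no leading word of W1 in its support; in particular it vanishes on all
words whose prefix of length a is not a normal form. The element \<gamma> = A - F2 A lies in W2, and
so does its restriction to the words with non-normal prefix; that restriction agrees with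
-F2 A restricted, so it also avoids the leading words of W2, hence it is 0. Thus \<gamma> only
involves words with normal prefix of length a, i.e. it lies in im(\<phi>) \<otimes> J_{n+1}.
For m < l_N(n+1), F2 is the identity and \<gamma>_1 vanishes.
\<close>

declare plus_fun_apply[simp del] zero_fun_apply[simp del] minus_apply[simp del] uminus_apply[simp del]
lemmas fun_arith_apply = plus_fun_apply zero_fun_apply minus_apply uminus_apply

lemma wless_iff_less: "wless u w \<longleftrightarrow> u < w"
  by (simp add: wless_def list_less_def)

lemma sum_fun_apply: "(\<Sum>u\<in>F. g u) w = (\<Sum>u\<in>F. g u w)"
  by (induction F rule: infinite_finite_induct) (auto simp: fun_arith_apply)

lemma smul_apply: "smul c v w = c * v w"
  by (simp add: smul_def)

lemma wvec_apply: "wvec u w = (if w = u then 1 else 0)"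
  by (simp add: wvec_def)

lemma smul_add_left: "smul (a + b) v = smul a v + smul b v"
  and smul_add_right: "smul c (u + v) = smul c u + smul c v"
  and smul_smul: "smul a (smul b v) = smul (a * b) v"
  and smul_minus_one: "smul (-1) v = - v"
  and smul_zero_left: "smul 0 v = 0"
  and smul_one: "smul 1 v = v"
  by (simp_all add: smul_def fun_eq_iff fun_arith_apply algebra_simps)

lemma smul_sum: "smul c (\<Sum>u\<in>F. g u) = (\<Sum>u\<in>F. smul c (g u))"
  by (simp add: fun_eq_iff smul_def sum_fun_apply sum_distrib_left)

subsection \<open>Linear spans\<close>

definition lin_closed :: "('x, 'k::field) vec set \<Rightarrow> bool" where
  "lin_closed D \<longleftrightarrow> 0 \<in> D \<and> (\<forall>x\<in>D. \<forall>y\<in>D. x + y \<in> D) \<and> (\<forall>c. \<forall>x\<in>D. smul c x \<in> D)"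

lemma lin_closedD:
  assumes "lin_closed D"
  shows lin_closed_zero: "0 \<in> D"
    and lin_closed_add: "x \<in> D \<Longrightarrow> y \<in> D \<Longrightarrow> x + y \<in> D"
    and lin_closed_smul: "x \<in> D \<Longrightarrow> smul c x \<in> D"
  using assms by (auto simp: lin_closed_def)

lemma lin_closed_diff: "lin_closed D \<Longrightarrow> x \<in> D \<Longrightarrow> y \<in> D \<Longrightarrow> x - y \<in> D"
  using lin_closed_add[of D x "smul (-1) y"] lin_closed_smul[of D y "-1"]
  by (simp add: smul_minus_one)

lemma lin_closed_sum: "lin_closed D \<Longrightarrow> (\<And>i. i \<in> I \<Longrightarrow> g i \<in> D) \<Longrightarrow> sum g I \<in> D"
  by (induction I rule: infinite_finite_induct) (auto intro: lin_closed_zero lin_closed_add)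

lemma lin_closed_set_plus:
  assumes A: "lin_closed A" and B: "lin_closed B"
  shows "lin_closed {x. \<exists>a\<in>A. \<exists>b\<in>B. x = a + b}" (is "lin_closed ?D")
  unfolding lin_closed_def
proof (intro conjI ballI allI)
  show "0 \<in> ?D"
    using lin_closed_zero[OF A] lin_closed_zero[OF B] by (intro CollectI bexI[of _ 0]) simp_all
next
  fix x y assume "x \<in> ?D" "y \<in> ?D"
  then obtain a b a' b' where "a \<in> A" "b \<in> B" "x = a + b" "a' \<in> A" "b' \<in> B" "y = a' + b'"
    by blast
  moreover have "x + y = (a + a') + (b + b')" if "x = a + b" "y = a' + b'"
    using that by (simp add: algebra_simps)
  ultimately show "x + y \<in> ?D"
    using lin_closed_add[OF A] lin_closed_add[OF B] by blast
next
  fix c x assume "x \<in> ?D"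
  then obtain a b where "a \<in> A" "b \<in> B" "x = a + b" by blast
  then show "smul c x \<in> ?D"
    using lin_closed_smul[OF A] lin_closed_smul[OF B] smul_add_right by blast
qed

lemma span_base: "x \<in> S \<Longrightarrow> x \<in> lin_span S"
  unfolding lin_span_def by (intro CollectI exI[of _ "{x}"] exI[of _ "\<lambda>_. 1"]) (simp add: smul_one)

lemma lin_closed_span: "lin_closed (lin_span S)"
  unfolding lin_closed_def
proof (intro conjI ballI allI)
  show "0 \<in> lin_span S"
    unfolding lin_span_def by (intro CollectI exI[of _ "{}"]) simp
next
  fix c x assume "x \<in> lin_span S"
  then obtain F d where F: "finite F" "F \<subseteq> S" "x = (\<Sum>u\<in>F. smul (d u) u)"
    unfolding lin_span_def by blast
  then have "smul c x = (\<Sum>u\<in>F. smul (c * d u) u)"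
    by (simp add: smul_sum smul_smul)
  then show "smul c x \<in> lin_span S"
    using F unfolding lin_span_def by (intro CollectI exI[of _ F] exI[of _ "\<lambda>u. c * d u"]) simp
next
  fix x y assume "x \<in> lin_span S" "y \<in> lin_span S"
  then obtain F c G d where F: "finite F" "F \<subseteq> S" "x = (\<Sum>u\<in>F. smul (c u) u)"
    and G: "finite G" "G \<subseteq> S" "y = (\<Sum>u\<in>G. smul (d u) u)"
    unfolding lin_span_def by blast
  define e where "e u = (if u \<in> F then c u else 0) + (if u \<in> G then d u else 0)" for u
  have "(\<Sum>u\<in>F \<union> G. smul (if u \<in> F then c u else 0) u) = x"
    unfolding F(3) by (rule sum.mono_neutral_cong_right) (use F G in \<open>auto simp: smul_zero_left\<close>)
  moreover have "(\<Sum>u\<in>F \<union> G. smul (if u \<in> G then d u else 0) u) = y"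
    unfolding G(3) by (rule sum.mono_neutral_cong_right) (use F G in \<open>auto simp: smul_zero_left\<close>)
  ultimately have "x + y = (\<Sum>u\<in>F \<union> G. smul (e u) u)"
    unfolding e_def smul_add_left sum.distrib by simp
  then show "x + y \<in> lin_span S"
    using F G unfolding lin_span_def by (intro CollectI exI[of _ "F \<union> G"] exI[of _ e]) simp
qed

lemmas span_zero = lin_closed_zero[OF lin_closed_span]
  and span_smul = lin_closed_smul[OF lin_closed_span]
  and span_sum = lin_closed_sum[OF lin_closed_span]

lemma span_subset_lin_closed:
  assumes "lin_closed D" "S \<subseteq> D"
  shows "lin_span S \<subseteq> D"
proof
  fix x assume "x \<in> lin_span S"
  then obtain F c where "finite F" "F \<subseteq> S" "x = (\<Sum>u\<in>F. smul (c u) u)"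
    unfolding lin_span_def by blast
  then show "x \<in> D"
    using assms by (auto intro!: lin_closed_sum lin_closed_smul)
qed

lemma span_mono: "S \<subseteq> T \<Longrightarrow> lin_span S \<subseteq> lin_span T"
  unfolding lin_span_def by blast

lemma tens_base: "a \<in> A \<Longrightarrow> b \<in> B \<Longrightarrow> cmul a b \<in> tens A B"
  unfolding tens_def by (rule span_base) blast

lemma tens_mono_left: "A \<subseteq> A' \<Longrightarrow> tens A B \<subseteq> tens A' B"
  unfolding tens_def by (rule span_mono) blast

subsection \<open>Homogeneous components\<close>

definition supp_on :: "nat \<Rightarrow> ('x, 'k::field) vec \<Rightarrow> bool" where
  "supp_on m v \<longleftrightarrow> (\<forall>w. v w \<noteq> 0 \<longrightarrow> length w = m)"

lemma finite_words: "finite {w::'x::finite list. length w = m}"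
  using finite_lists_length_eq[OF finite_UNIV[where 'a='x], of m] by simp

lemma lin_closed_support_within: "lin_closed {v. \<forall>w. v w \<noteq> 0 \<longrightarrow> P w}"
  unfolding lin_closed_def
  by (auto simp: smul_apply fun_arith_apply) (metis add.right_neutral)

lemma lin_closed_supp_on: "lin_closed {v. supp_on m v}"
  unfolding supp_on_def by (rule lin_closed_support_within)

lemma expand_words:
  assumes "supp_on m (v::('x::finite, 'k::field) vec)"
  shows "v = (\<Sum>w\<in>{w. length w = m}. smul (v w) (wvec w))"
proof
  fix z
  have "(\<Sum>w\<in>{w::'x list. length w = m}. smul (v w) (wvec w)) z
      = (\<Sum>w\<in>{w::'x list. length w = m}. if z = w then v z else 0)"
    unfolding sum_fun_apply by (rule sum.cong) (auto simp: smul_apply wvec_apply)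
  also have "\<dots> = (if z \<in> {w. length w = m} then v z else 0)"
    by (rule sum.delta'[OF finite_words])
  also have "\<dots> = v z"
    using assms by (auto simp: supp_on_def)
  finally show "v z = (\<Sum>w\<in>{w. length w = m}. smul (v w) (wvec w)) z" by simp
qed

lemma Vpow_iff_supp_on: "(v::('x::finite, 'k::field) vec) \<in> Vpow m \<longleftrightarrow> supp_on m v"
proof
  have "Vpow m \<subseteq> {v::('x, 'k) vec. supp_on m v}"
    unfolding Vpow_def
    by (rule span_subset_lin_closed[OF lin_closed_supp_on]) (auto simp: supp_on_def wvec_apply split: if_splits)
  then show "v \<in> Vpow m \<Longrightarrow> supp_on m v" by blast
next
  assume "supp_on m v"
  then have "v = (\<Sum>w\<in>{w. length w = m}. smul (v w) (wvec w))" by (rule expand_words)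
  also have "\<dots> \<in> Vpow m"
    unfolding Vpow_def by (intro span_sum span_smul span_base) auto
  finally show "v \<in> Vpow m" .
qed

lemma lin_closed_Vpow: "lin_closed (Vpow m)"
  unfolding Vpow_def by (rule lin_closed_span)

lemmas Vpow_zero = lin_closed_zero[OF lin_closed_Vpow]
  and Vpow_add = lin_closed_add[OF lin_closed_Vpow]
  and Vpow_smul = lin_closed_smul[OF lin_closed_Vpow]
  and Vpow_diff = lin_closed_diff[OF lin_closed_Vpow]

lemma span_subset_Vpow: "S \<subseteq> Vpow m \<Longrightarrow> lin_span S \<subseteq> Vpow m"
  by (rule span_subset_lin_closed[OF lin_closed_Vpow])

lemma wvec_in_Vpow: "wvec u \<in> (Vpow (length u) :: ('x::finite, 'k::field) vec set)"
  by (auto simp: Vpow_iff_supp_on supp_on_def wvec_apply)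

lemma Vpow_finite_support: "(v::('x::finite, 'k::field) vec) \<in> Vpow m \<Longrightarrow> finite {w. v w \<noteq> 0}"
  by (rule finite_subset[OF _ finite_words[of m]]) (auto simp: Vpow_iff_supp_on supp_on_def)

lemma Vpow_outside: "(v::('x::finite, 'k::field) vec) \<in> Vpow m \<Longrightarrow> length w \<noteq> m \<Longrightarrow> v w = 0"
  unfolding Vpow_iff_supp_on supp_on_def by blast

lemma Vpow_mem_lin_closed:
  assumes D: "lin_closed D" and x: "(x::('x::finite, 'k::field) vec) \<in> Vpow m"
    and words: "\<And>u. length u = m \<Longrightarrow> x u \<noteq> 0 \<Longrightarrow> wvec u \<in> D"
  shows "x \<in> D"
proof -
  have "x = (\<Sum>u\<in>{u. length u = m}. smul (x u) (wvec u))"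
    using x by (simp add: expand_words Vpow_iff_supp_on)
  also have "\<dots> \<in> D"
  proof (rule lin_closed_sum[OF D])
    fix u :: "'x list" assume "u \<in> {u. length u = m}"
    then show "smul (x u) (wvec u) \<in> D"
      using words[of u] lin_closed_zero[OF D] lin_closed_smul[OF D]
      by (cases "x u = 0") (auto simp: smul_zero_left)
  qed
  finally show ?thesis .
qed

lemma deg_comp_in_Vpow: "deg_comp m (v::('x::finite, 'k::field) vec) \<in> Vpow m"
  by (simp add: Vpow_iff_supp_on supp_on_def deg_comp_def)

lemma deg_comp_Vpow: "(v::('x::finite, 'k::field) vec) \<in> Vpow m \<Longrightarrow> deg_comp m v = v"
  by (auto simp: Vpow_iff_supp_on supp_on_def deg_comp_def fun_eq_iff)

lemma cmul_nonzero_split: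
  assumes "cmul a b w \<noteq> 0"
  shows "\<exists>i\<le>length w. a (take i w) \<noteq> 0 \<and> b (drop i w) \<noteq> 0"
proof (rule ccontr)
  assume "\<not> ?thesis"
  then have "cmul a b w = 0"
    unfolding cmul_def by (intro sum.neutral) auto
  with assms show False by simp
qed

lemma supp_on_cmul: "supp_on p a \<Longrightarrow> supp_on q b \<Longrightarrow> supp_on (p + q) (cmul a b)"
  unfolding supp_on_def
proof (intro allI impI)
  fix w assume a: "\<forall>w. a w \<noteq> 0 \<longrightarrow> length w = p" and b: "\<forall>w. b w \<noteq> 0 \<longrightarrow> length w = q"
    and "cmul a b w \<noteq> 0"
  then obtain i where "i \<le> length w" "a (take i w) \<noteq> 0" "b (drop i w) \<noteq> 0"
    using cmul_nonzero_split by blast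
  then have "length (take i w) = p" "length (drop i w) = q" using a b by auto
  then show "length w = p + q" using \<open>i \<le> length w\<close> by simp
qed

lemma tens_subset_Vpow:
  assumes "A \<subseteq> Vpow p" "B \<subseteq> Vpow q"
  shows "tens A B \<subseteq> (Vpow (p + q) :: ('x::finite, 'k::field) vec set)"
  unfolding tens_def
proof (rule span_subset_Vpow, safe)
  fix a b assume "a \<in> A" "b \<in> B"
  then have "supp_on p a" "supp_on q b" using assms by (auto simp: Vpow_iff_supp_on)
  then show "cmul a b \<in> Vpow (p + q)" by (simp add: Vpow_iff_supp_on supp_on_cmul)
qed

subsection \<open>Standard words of a subspace and reduction operators\<close>

definition homog_subspace :: "nat \<Rightarrow> ('x::finite, 'k::field) vec set \<Rightarrow> bool" where
  "homog_subspace m W \<longleftrightarrow> W \<subseteq> Vpow m \<and> lin_closed W"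

lemma homog_subspace_tens:
  "A \<subseteq> Vpow p \<Longrightarrow> B \<subseteq> Vpow q \<Longrightarrow> homog_subspace (p + q) (tens A B :: ('x::finite, 'k::field) vec set)"
  unfolding homog_subspace_def tens_def
  using tens_subset_Vpow[of A p B q] by (simp add: tens_def lin_closed_span)

definition lead_words :: "('x::linorder, 'k::field) vec set \<Rightarrow> 'x list set" where
  "lead_words W = {w. \<exists>f\<in>W. f w \<noteq> 0 \<and> (\<forall>u. f u \<noteq> 0 \<longrightarrow> u \<le> w)}"

definition std_span :: "nat \<Rightarrow> ('x::{finite,linorder}, 'k::field) vec set \<Rightarrow> ('x, 'k) vec set" where
  "std_span m W = {v \<in> Vpow m. \<forall>u\<in>lead_words W. v u = 0}"

lemma lin_closed_std_span: "lin_closed (std_span m W)"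
  by (auto simp: lin_closed_def std_span_def Vpow_zero Vpow_add Vpow_smul fun_arith_apply smul_apply)

lemma lead_wordsI: "f \<in> W \<Longrightarrow> f w \<noteq> 0 \<Longrightarrow> (\<And>u. f u \<noteq> 0 \<Longrightarrow> u \<le> w) \<Longrightarrow> w \<in> lead_words W"
  unfolding lead_words_def by blast

lemma Vpow_max_support:
  assumes "(v::('x::{finite,linorder}, 'k::field) vec) \<in> Vpow m" "v u \<noteq> 0"
  obtains M where "v M \<noteq> 0" "u \<le> M" "\<And>u. v u \<noteq> 0 \<Longrightarrow> u \<le> M"
proof -
  let ?S = "{w. v w \<noteq> 0}"
  have "finite ?S" using Vpow_finite_support[OF assms(1)] .
  moreover have "u \<in> ?S" using assms(2) by simp
  ultimately show ?thesis using Max_in[of ?S] Max_ge[of ?S] that by blast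
qed

lemma std_span_inter_zero:
  assumes W: "homog_subspace m W" and v: "v \<in> W" "v \<in> std_span m W"
  shows "v = 0"
proof (rule ccontr)
  assume "v \<noteq> 0"
  then obtain u where "v u \<noteq> 0" by (auto simp: fun_eq_iff fun_arith_apply)
  moreover have "v \<in> Vpow m" using W v(1) by (auto simp: homog_subspace_def)
  ultimately obtain M where M: "v M \<noteq> 0" "\<And>u. v u \<noteq> 0 \<Longrightarrow> u \<le> M"
    using Vpow_max_support by metis
  then have "M \<in> lead_words W" using v(1) by (rule lead_wordsI[rotated])
  then show False using v(2) M(1) by (simp add: std_span_def)
qed

lemma words_less_induct [consumes 1, case_names less]:
  fixes P :: "'x::{finite,linorder} list \<Rightarrow> bool"
  assumes "length w = m"
    and "\<And>w. length w = m \<Longrightarrow> (\<And>u. length u = m \<Longrightarrow> u < w \<Longrightarrow> P u) \<Longrightarrow> P w"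
  shows "P w"
proof -
  define rank where "rank w = card {x::'x list. length x = m \<and> x < w}" for w
  have "rank u < rank w" if "length u = m" "u < w" for u w
    unfolding rank_def using that
    by (intro psubset_card_mono finite_subset[OF _ finite_words[of m]]) auto
  then have "length w = m \<longrightarrow> P w"
    using assms(2) by (induction w rule: measure_induct_rule[of rank]) blast
  then show ?thesis using assms(1) by blast
qed

lemma homog_subspace_decompose:
  assumes W: "homog_subspace m (W::('x::{finite,linorder}, 'k::field) vec set)"
    and v: "v \<in> Vpow m"
  shows "\<exists>a b. a \<in> W \<and> b \<in> std_span m W \<and> v = a + b"
proof -
  define D where "D = {x. \<exists>a\<in>W. \<exists>b\<in>std_span m W. x = a + b}"
  have W': "lin_closed W" using W by (simp add: homog_subspace_def)
  note S = lin_closed_std_span[of m W]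
  have D: "lin_closed D"
    unfolding D_def by (rule lin_closed_set_plus[OF W' S])
  have "wvec w \<in> D" if "length w = m" for w
    using that
  proof (induction rule: words_less_induct)
    case (less w)
    have wV: "wvec w \<in> Vpow m" using less.hyps wvec_in_Vpow by metis
    show ?case
    proof (cases "w \<in> lead_words W")
      case False
      then have "wvec w \<in> std_span m W" using wV by (auto simp: std_span_def wvec_apply)
      then show ?thesis unfolding D_def using lin_closed_zero[OF W']
        by (intro CollectI bexI[of _ 0] bexI[of _ "wvec w"]) simp_all
    next
      case True
      then obtain f where f: "f \<in> W" "f w \<noteq> 0" "\<And>u. f u \<noteq> 0 \<Longrightarrow> u \<le> w"
        unfolding lead_words_def by blast
      define r where "r = wvec w - smul (1 / f w) f"
      \<comment> \<open>subtracting the normalised f cancels w and leaves only smaller words\<close>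
      have rV: "r \<in> Vpow m"
        using W f(1) wV by (auto simp: r_def homog_subspace_def intro: Vpow_diff Vpow_smul)
      have r_less: "u < w" if "r u \<noteq> 0" for u
      proof -
        have r_apply: "r u = (if u = w then 1 else 0) - f u / f w"
          by (simp add: r_def fun_arith_apply smul_apply wvec_apply)
        then have "u \<noteq> w" using that f(2) by auto
        then have "f u \<noteq> 0" using that r_apply by auto
        then show "u < w" using f(3)[of u] \<open>u \<noteq> w\<close> by simp
      qed
      have "r \<in> D"
      proof (rule Vpow_mem_lin_closed[OF D rV])
        fix u assume "length u = m" "r u \<noteq> 0"
        then show "wvec u \<in> D" using less.IH r_less by blast
      qed
      moreover have "smul (1 / f w) f \<in> D"
        unfolding D_def using lin_closed_smul[OF W' f(1)] lin_closed_zero[OF S]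
        by (intro CollectI bexI[of _ "smul (1 / f w) f"] bexI[of _ 0]) simp_all
      ultimately have "smul (1 / f w) f + r \<in> D" by (intro lin_closed_add[OF D])
      then show ?thesis by (simp add: r_def)
    qed
  qed
  then have "v \<in> D" by (intro Vpow_mem_lin_closed[OF D v])
  then show ?thesis unfolding D_def by blast
qed


definition std_proj :: "nat \<Rightarrow> ('x::{finite,linorder}, 'k::field) vec set \<Rightarrow> ('x, 'k) vec \<Rightarrow> ('x, 'k) vec" where
  "std_proj m W v = (THE b. b \<in> std_span m W \<and> deg_comp m v - b \<in> W)"

lemma std_proj_unique:
  assumes W: "homog_subspace m W"
    and "b1 \<in> std_span m W" "x - b1 \<in> W" "b2 \<in> std_span m W" "x - b2 \<in> W"
  shows "b1 = b2"
proof -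
  have "b2 - b1 = (x - b1) - (x - b2)" by simp
  moreover have "lin_closed W" using W by (simp add: homog_subspace_def)
  ultimately have "b2 - b1 \<in> W"
    using lin_closed_diff assms(3,5) by metis
  moreover have "b2 - b1 \<in> std_span m W"
    using assms(2,4) by (rule lin_closed_diff[OF lin_closed_std_span, rotated])
  ultimately show ?thesis using std_span_inter_zero[OF W] by fastforce
qed

lemma std_proj_mem:
  assumes W: "homog_subspace m W"
  shows "std_proj m W v \<in> std_span m W" "deg_comp m v - std_proj m W v \<in> W"
proof -
  obtain a b where ab: "a \<in> W" "b \<in> std_span m W" "deg_comp m v = a + b"
    using homog_subspace_decompose[OF W deg_comp_in_Vpow] by blast
  then have ex: "b \<in> std_span m W \<and> deg_comp m v - b \<in> W" by simp
  have "std_proj m W v \<in> std_span m W \<and> deg_comp m v - std_proj m W v \<in> W"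
    unfolding std_proj_def
    by (rule theI[where P = "\<lambda>b. b \<in> std_span m W \<and> deg_comp m v - b \<in> W"])
      (use ex std_proj_unique[OF W] in blast)+
  then show "std_proj m W v \<in> std_span m W" "deg_comp m v - std_proj m W v \<in> W" by blast+
qed

lemma std_proj_mem_Vpow:
  assumes "homog_subspace m W" "v \<in> Vpow m"
  shows "std_proj m W v \<in> std_span m W" "v - std_proj m W v \<in> W"
  using std_proj_mem[OF assms(1), of v] by (simp_all add: deg_comp_Vpow[OF assms(2)])

lemma std_proj_eqI:
  assumes W: "homog_subspace m W" and "b \<in> std_span m W" "deg_comp m v - b \<in> W"
  shows "std_proj m W v = b"
  using std_proj_unique[OF W std_proj_mem[OF W] assms(2,3)] .

lemma std_proj_wvec_lower:
  assumes W: "homog_subspace m (W::('x::{finite,linorder}, 'k::field) vec set)"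
    and w: "w \<in> lead_words W" and u: "std_proj m W (wvec w) u \<noteq> 0"
  shows "u < w"
proof (rule ccontr)
  define b where "b = std_proj m W (wvec w)"
  have lw: "length w = m"
    using w W by (auto simp: lead_words_def homog_subspace_def Vpow_iff_supp_on supp_on_def)
  have bS: "b \<in> std_span m W" and dW: "wvec w - b \<in> W"
    unfolding b_def using std_proj_mem_Vpow[OF W] wvec_in_Vpow[of w] lw by auto
  have "b w = 0" using bS w by (simp add: std_span_def)
  then have "u \<noteq> w" using u by (auto simp: b_def)
  moreover assume "\<not> u < w"
  ultimately have "w < u" by simp
  \<comment> \<open>the greatest word of the support of wvec w - b would be a leading word of W on which b is not 0\<close>
  have dV: "wvec w - b \<in> Vpow m" using W dW by (auto simp: homog_subspace_def)
  have "(wvec w - b) u \<noteq> 0" using u \<open>u \<noteq> w\<close> by (simp add: b_def fun_arith_apply wvec_apply)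
  then obtain M where M: "(wvec w - b) M \<noteq> 0" "u \<le> M" "\<And>v. (wvec w - b) v \<noteq> 0 \<Longrightarrow> v \<le> M"
    using Vpow_max_support[OF dV] by metis
  have "M \<in> lead_words W" using dW M(1,3) by (rule lead_wordsI)
  then have "b M = 0" using bS by (simp add: std_span_def)
  moreover have "M \<noteq> w" using M(2) \<open>w < u\<close> by auto
  ultimately show False using M(1) by (simp add: fun_arith_apply wvec_apply)
qed

lemma std_proj_wvec:
  assumes W: "homog_subspace m (W::('x::{finite,linorder}, 'k::field) vec set)" and lw: "length w = m"
  shows "std_proj m W (wvec w) = wvec w \<or>
    std_proj m W (wvec w) \<in> lin_span {wvec u |u. length u = m \<and> wless u w}"
proof (cases "w \<in> lead_words W")
  case False
  have wV: "wvec w \<in> Vpow m" using lw wvec_in_Vpow by metis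
  with False have "wvec w \<in> std_span m W" by (auto simp: std_span_def wvec_apply)
  then have "std_proj m W (wvec w) = wvec w"
    using W by (intro std_proj_eqI) (simp_all add: deg_comp_Vpow[OF wV] homog_subspace_def lin_closed_zero)
  then show ?thesis by blast
next
  case True
  have "std_proj m W (wvec w) \<in> Vpow m" using std_proj_mem[OF W] by (simp add: std_span_def)
  then have "std_proj m W (wvec w) \<in> lin_span {wvec u |u. length u = m \<and> wless u w}"
  proof (rule Vpow_mem_lin_closed[OF lin_closed_span])
    fix u assume "length u = m" "std_proj m W (wvec w) u \<noteq> 0"
    then show "wvec u \<in> lin_span {wvec u |u. length u = m \<and> wless u w}"
      using std_proj_wvec_lower[OF W True] by (auto simp: wless_iff_less intro: span_base)
  qed
  then show ?thesis by blast
qed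

lemma red_op_std_proj:
  assumes W: "homog_subspace m (W::('x::{finite,linorder}, 'k::field) vec set)"
  shows "red_op m (std_proj m W)"
  unfolding red_op_def
proof (intro conjI allI ballI impI)
  show "std_proj m W v = std_proj m W (deg_comp m v)" for v
    unfolding std_proj_def by (simp add: deg_comp_Vpow deg_comp_in_Vpow)
next
  fix u v :: "('x, 'k) vec" and a b :: 'k
  assume u: "u \<in> Vpow m" and v: "v \<in> Vpow m"
  have "smul a u + smul b v \<in> Vpow m" using u v by (simp add: Vpow_add Vpow_smul)
  then have dc: "deg_comp m (smul a u + smul b v) = smul a u + smul b v" by (rule deg_comp_Vpow)
  have "smul a u + smul b v - (smul a (std_proj m W u) + smul b (std_proj m W v))
      = smul a (u - std_proj m W u) + smul b (v - std_proj m W v)"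
    by (simp add: fun_eq_iff fun_arith_apply smul_apply algebra_simps)
  moreover have "lin_closed W" using W by (simp add: homog_subspace_def)
  ultimately show "std_proj m W (smul a u + smul b v) = smul a (std_proj m W u) + smul b (std_proj m W v)"
    using std_proj_mem_Vpow[OF W u] std_proj_mem_Vpow[OF W v] lin_closed_std_span[of m W]
    by (intro std_proj_eqI[OF W]) (simp_all add: dc lin_closedD)
next
  fix v :: "('x, 'k) vec" assume v: "v \<in> Vpow m"
  have P: "std_proj m W v \<in> std_span m W" using std_proj_mem[OF W] by blast
  then show PV: "std_proj m W v \<in> Vpow m" by (simp add: std_span_def)
  show "std_proj m W (std_proj m W v) = std_proj m W v"
    using P W by (intro std_proj_eqI) (simp_all add: deg_comp_Vpow[OF PV] homog_subspace_def lin_closed_zero)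
next
  show "std_proj m W (wvec w) = wvec w \<or>
        std_proj m W (wvec w) \<in> lin_span {wvec u |u. length u = m \<and> wless u w}"
    if "length w = m" for w
    using std_proj_wvec[OF W that] .
qed

lemma std_proj_kernel:
  assumes W: "homog_subspace m (W::('x::{finite,linorder}, 'k::field) vec set)"
  shows "{v \<in> Vpow m. std_proj m W v = 0} = W"
proof (intro set_eqI iffI)
  fix v assume "v \<in> {v \<in> Vpow m. std_proj m W v = 0}"
  then show "v \<in> W" using std_proj_mem_Vpow[OF W, of v] by simp
next
  fix v assume "v \<in> W"
  then have vV: "v \<in> Vpow m" using W by (auto simp: homog_subspace_def)
  have "std_proj m W v = 0"
    using \<open>v \<in> W\<close> by (intro std_proj_eqI[OF W lin_closed_zero[OF lin_closed_std_span]])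
      (simp add: deg_comp_Vpow[OF vV])
  then show "v \<in> {v \<in> Vpow m. std_proj m W v = 0}" using vV by simp
qed


lemma red_op_linear:
  assumes "red_op m T" "x \<in> Vpow m" "y \<in> Vpow m"
  shows "T (smul a x + smul b y) = smul a (T x) + smul b (T y)"
  using assms unfolding red_op_def by blast

lemma red_op_sum:
  assumes T: "red_op m T" and g: "\<And>i. i \<in> I \<Longrightarrow> g i \<in> Vpow m"
  shows "T (\<Sum>i\<in>I. smul (c i) (g i)) = (\<Sum>i\<in>I. smul (c i) (T (g i)))"
  using g
proof (induction I rule: infinite_finite_induct)
  case (infinite A)
  then show ?case using red_op_linear[OF T Vpow_zero Vpow_zero, of 0 0] by (simp add: smul_zero_left)
next
  case empty
  then show ?case using red_op_linear[OF T Vpow_zero Vpow_zero, of 0 0] by (simp add: smul_zero_left)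
next
  case (insert i F)
  have "(\<Sum>i\<in>F. smul (c i) (g i)) \<in> Vpow m"
    using insert by (auto intro!: lin_closed_sum[OF lin_closed_Vpow] Vpow_smul)
  then have "T (smul (c i) (g i) + smul 1 (\<Sum>i\<in>F. smul (c i) (g i)))
      = smul (c i) (T (g i)) + smul 1 (T (\<Sum>i\<in>F. smul (c i) (g i)))"
    using insert.prems by (intro red_op_linear[OF T]) simp_all
  then show ?case using insert by (simp add: smul_one)
qed

lemma red_op_apply:
  assumes T: "red_op m T" and x: "(x::('x::{finite,linorder}, 'k::field) vec) \<in> Vpow m"
  shows "T x z = (\<Sum>u\<in>{u. length u = m}. x u * T (wvec u) z)"
proof -
  have "T x = T (\<Sum>u\<in>{u. length u = m}. smul (x u) (wvec u))"
    using x by (simp add: expand_words[symmetric] Vpow_iff_supp_on)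
  also have "\<dots> = (\<Sum>u\<in>{u. length u = m}. smul (x u) (T (wvec u)))"
    by (rule red_op_sum[OF T]) (metis mem_Collect_eq wvec_in_Vpow)
  finally show ?thesis by (simp add: sum_fun_apply smul_apply)
qed

lemma red_op_wvec_less:
  fixes T :: "('x::{finite,linorder}, 'k::field) vec \<Rightarrow> ('x, 'k) vec"
  assumes T: "red_op m T" and "length u = m" "T (wvec u) \<noteq> wvec u" "T (wvec u) z \<noteq> 0"
  shows "z < u"
proof -
  have "T (wvec u) \<in> lin_span {wvec u' |u'. length u' = m \<and> wless u' u}"
    using T assms(2,3) unfolding red_op_def by blast
  moreover have "lin_span {wvec u' |u'. length u' = m \<and> wless u' u} \<subseteq> {v. \<forall>z. v z \<noteq> 0 \<longrightarrow> z < u}"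
    by (rule span_subset_lin_closed[OF lin_closed_support_within])
      (auto simp: wvec_apply wless_iff_less split: if_splits)
  ultimately show ?thesis using assms(4) by blast
qed

lemma red_op_wvec_le:
  fixes T :: "('x::{finite,linorder}, 'k::field) vec \<Rightarrow> ('x, 'k) vec"
  assumes T: "red_op m T" and "length u = m" "T (wvec u) z \<noteq> 0"
  shows "z \<le> u"
proof (cases "T (wvec u) = wvec u")
  case True
  then show ?thesis using assms(3) by (auto simp: wvec_apply split: if_splits)
next
  case False
  then show ?thesis using red_op_wvec_less[OF T assms(2) False assms(3)] by simp
qed

text \<open>A fixed vector of a reduction operator is supported on the words it fixes: at the
greatest moved word of the support, all the other words contribute 0.\<close>
lemma red_op_fixed_vanishes:
  assumes T: "red_op m T" and x: "(x::('x::{finite,linorder}, 'k::field) vec) \<in> Vpow m"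
    and fixed: "T x = x" and b: "length b = m" "T (wvec b) \<noteq> wvec b"
  shows "x b = 0"
proof (rule ccontr)
  assume "x b \<noteq> 0"
  let ?S = "{b. length b = m \<and> T (wvec b) \<noteq> wvec b \<and> x b \<noteq> 0}"
  have fin: "finite ?S" by (rule finite_subset[OF _ finite_words[of m]]) auto
  have "b \<in> ?S" using b \<open>x b \<noteq> 0\<close> by simp
  then have MS: "Max ?S \<in> ?S" using Max_in[OF fin] by blast
  have "x (Max ?S) = (\<Sum>u\<in>{u. length u = m}. x u * T (wvec u) (Max ?S))"
    using red_op_apply[OF T x] fixed by metis
  also have "\<dots> = 0"
  proof (intro sum.neutral ballI)
    fix u :: "'x list" assume u: "u \<in> {u. length u = m}"
    show "x u * T (wvec u) (Max ?S) = 0"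
    proof (cases "x u = 0 \<or> T (wvec u) = wvec u")
      case True
      then show ?thesis using MS by (auto simp: wvec_apply split: if_splits)
    next
      case False
      then have "u \<le> Max ?S" using Max_ge[OF fin] u by simp
      then show ?thesis using red_op_wvec_less[OF T _, of u "Max ?S"] u False by force
    qed
  qed
  finally show False using MS by simp
qed

lemma red_op_moves_lead_words:
  fixes T :: "('x::{finite,linorder}, 'k::field) vec \<Rightarrow> ('x, 'k) vec"
  assumes T: "red_op m T" and w: "w \<in> lead_words {v \<in> Vpow m. T v = 0}"
  shows "length w = m \<and> T (wvec w) \<noteq> wvec w"
proof -
  obtain f where f: "f \<in> Vpow m" "T f = 0" "f w \<noteq> 0" "\<And>u. f u \<noteq> 0 \<Longrightarrow> u \<le> w"
    using w unfolding lead_words_def by blast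
  have lw: "length w = m" using f(1,3) Vpow_outside by metis
  have "0 = T f w" using f(2) by (simp add: fun_arith_apply)
  also have "\<dots> = (\<Sum>u\<in>{u. length u = m}. f u * T (wvec u) w)" by (rule red_op_apply[OF T f(1)])
  also have "\<dots> = (\<Sum>u\<in>{u. length u = m}. if w = u then f w * T (wvec w) w else 0)"
  proof (rule sum.cong[OF refl])
    fix u :: "'x list" assume u: "u \<in> {u. length u = m}"
    show "f u * T (wvec u) w = (if w = u then f w * T (wvec w) w else 0)"
    proof (cases "w = u \<or> f u = 0")
      case False
      then have "u < w" using f(4) by force
      then have "T (wvec u) w = 0" using red_op_wvec_le[OF T, of u w] u by force
      then show ?thesis using False by simp
    qed auto
  qed
  also have "\<dots> = f w * T (wvec w) w" using lw by (simp add: sum.delta'[OF finite_words])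
  finally have "T (wvec w) w = 0" using f(3) by simp
  then show ?thesis using lw by (auto simp: wvec_apply)
qed

lemma red_op_unique:
  fixes T :: "('x::{finite,linorder}, 'k::field) vec \<Rightarrow> ('x, 'k) vec"
  assumes W: "homog_subspace m W" and T: "red_op m T" and K: "{v \<in> Vpow m. T v = 0} = W"
  shows "T = std_proj m W"
proof
  fix v :: "('x, 'k) vec"
  define y where "y = deg_comp m v"
  have yV: "y \<in> Vpow m" unfolding y_def by (rule deg_comp_in_Vpow)
  have "T v = T y" "std_proj m W v = std_proj m W y"
    using T red_op_std_proj[OF W] unfolding red_op_def y_def by blast+
  moreover have TyV: "T y \<in> Vpow m" and TT: "T (T y) = T y" using T yV unfolding red_op_def by blast+
  moreover have "T y \<in> std_span m W"
    unfolding std_span_def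
    using TyV red_op_fixed_vanishes[OF T TyV TT] red_op_moves_lead_words[OF T] K by blast
  moreover have "y - T y \<in> W"
  proof -
    have "T (smul 1 y + smul (-1) (T y)) = smul 1 (T y) + smul (-1) (T (T y))"
      by (rule red_op_linear[OF T yV TyV])
    then have "T (y - T y) = 0" using TT by (simp add: smul_one smul_minus_one)
    then show ?thesis using K Vpow_diff[OF yV TyV] by blast
  qed
  ultimately show "T v = std_proj m W v"
    using std_proj_eqI[OF W] deg_comp_Vpow[OF yV] by metis
qed

lemma theta_inv_eq_std_proj:
  assumes W: "homog_subspace m (W::('x::{finite,linorder}, 'k::field) vec set)"
  shows "theta_inv m W = std_proj m W"
  unfolding theta_inv_def
  using red_op_std_proj[OF W] std_proj_kernel[OF W] red_op_unique[OF W]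
  by (intro the_equality) blast+


subsection \<open>Leading words coming from the relations\<close>

lemma cmul_wvec_left:
  "cmul (wvec u) g z = (if \<exists>y. z = u @ y then g (drop (length u) z) else 0)"
proof -
  have take_iff: "take i z = u \<longleftrightarrow> i = length u \<and> (\<exists>y. z = u @ y)" if "i \<le> length z" for i
    using that by (metis append_take_drop_id append_eq_conv_conj length_take min.absorb2)
  have "cmul (wvec u) g z = (\<Sum>i\<in>{..length z}.
      if i = length u then (if \<exists>y. z = u @ y then g (drop (length u) z) else 0) else 0)"
    unfolding cmul_def by (rule sum.cong[OF refl]) (auto simp: wvec_apply take_iff)
  then show ?thesis by (auto simp: sum.delta)
qed

lemma cmul_wvec_right:
  "cmul g (wvec v) z = (if \<exists>y. z = y @ v then g (take (length z - length v) z) else 0)"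
proof -
  have drop_iff: "drop i z = v \<longleftrightarrow> i = length z - length v \<and> (\<exists>y. z = y @ v)" if "i \<le> length z" for i
    using that by (metis append_take_drop_id append_eq_conv_conj diff_diff_cancel length_drop
        length_append add_diff_cancel_right' drop_all)
  have "cmul g (wvec v) z = (\<Sum>i\<in>{..length z}.
      if i = length z - length v then (if \<exists>y. z = y @ v then g (take (length z - length v) z) else 0) else 0)"
    unfolding cmul_def by (rule sum.cong[OF refl]) (auto simp: wvec_apply drop_iff)
  then show ?thesis by (auto simp: sum.delta)
qed

lemma lm_greatest:
  assumes f: "(f::('x::{finite,linorder}, 'k::field) vec) \<in> Vpow N" "f \<noteq> 0"
  shows "f (lm f) \<noteq> 0" "\<And>u. f u \<noteq> 0 \<Longrightarrow> u \<le> lm f" "length (lm f) = N"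
proof -
  obtain u where "f u \<noteq> 0" using f(2) by (auto simp: fun_eq_iff fun_arith_apply)
  then obtain M where M: "f M \<noteq> 0" "\<And>u. f u \<noteq> 0 \<Longrightarrow> u \<le> M"
    using Vpow_max_support[OF f(1)] by metis
  have "lm f = M"
    unfolding lm_def wless_iff_less
  proof (rule the_equality)
    show "f M \<noteq> 0 \<and> (\<forall>u. f u \<noteq> 0 \<longrightarrow> u = M \<or> u < M)"
      using M by (auto simp: order.order_iff_strict)
    show "w = M" if "f w \<noteq> 0 \<and> (\<forall>u. f u \<noteq> 0 \<longrightarrow> u = w \<or> u < w)" for w
    proof (rule antisym)
      show "w \<le> M" using that M(2) by blast
      show "M \<le> w" using that M(1) by auto
    qed
  qed
  then show "f (lm f) \<noteq> 0" "\<And>u. f u \<noteq> 0 \<Longrightarrow> u \<le> lm f" "length (lm f) = N"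
    using M f(1) Vpow_outside by metis+
qed

lemma less_append_middle:
  assumes "(x::'a::linorder list) < y" "length x = length y"
  shows "u @ x @ r < u @ y @ r'"
proof -
  have "(x @ r, y @ r') \<in> lexord {(a, b). a < b}"
    using assms by (intro lexord_sufI) (auto simp: list_less_def)
  then show ?thesis by (simp add: list_less_def lexord_append_leftI)
qed

lemma shifted_lead_word:
  assumes "(f::('x::{finite,linorder}, 'k::field) vec) \<in> Vpow N" "f \<noteq> 0"
  shows "u @ lm f @ v @ s \<in> lead_words {cmul (cmul (cmul (wvec u) f) (wvec v)) (wvec s)}"
proof (rule lead_wordsI)
  let ?e = "cmul (cmul (cmul (wvec u) f) (wvec v)) (wvec s)"
  have e_apply: "?e z = (if \<exists>x. z = u @ x @ v @ s then f (drop (length u) (take (length z - length s - length v) z)) else 0)"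
    for z
    by (auto simp: cmul_wvec_left cmul_wvec_right)
  show "?e (u @ lm f @ v @ s) \<noteq> 0" using lm_greatest[OF assms] by (simp add: e_apply)
  fix z assume "?e z \<noteq> 0"
  then obtain x where z: "z = u @ x @ v @ s" and "f x \<noteq> 0" by (auto simp: e_apply split: if_splits)
  then have "length x = N" using assms(1) Vpow_outside by metis
  then show "z \<le> u @ lm f @ v @ s"
    using \<open>f x \<noteq> 0\<close> lm_greatest[OF assms] less_append_middle[of x "lm f" u "v @ s" "v @ s"]
    by (cases "x = lm f") (auto simp: z order.order_iff_strict)
qed simp

lemma shifted_relation_in_IR_tens:
  assumes f: "f \<in> R" and j: "length u + N + length v = j" and l: "length s = l"
  shows "cmul (cmul (cmul (wvec u) f) (wvec v)) (wvec s)
    \<in> tens (IR N R j) (Vpow l :: ('x::finite, 'k::field) vec set)"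
proof -
  have "cmul (cmul (wvec u) f) (wvec v) \<in> tens (tens (Vpow (length u)) (Rbar R)) (Vpow (j - N - length u))"
    using j f by (intro tens_base) (auto simp: Rbar_def span_base wvec_in_Vpow)
  then have "cmul (cmul (wvec u) f) (wvec v) \<in> IR N R j"
    unfolding IR_def using j by (auto intro!: span_base bexI[of _ "length u"])
  then show ?thesis using l wvec_in_Vpow by (metis tens_base)
qed

lemma nonnormal_prefix_lead_word:
  fixes R :: "('x::{finite,linorder}, 'k::field) vec set"
  assumes red: "reduced_pres N R" and w: "length w = j + l" and a: "a \<le> j"
    and nonnormal: "\<not> normal_word R (take a w)"
  shows "w \<in> lead_words (tens (IR N R j) (Vpow l))"
proof -
  obtain f u v where f: "f \<in> R" and uv: "take a w = u @ lm f @ v"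
    using nonnormal unfolding normal_word_def by blast
  have fV: "f \<in> Vpow N" and "f \<noteq> 0" using red f unfolding reduced_pres_def by auto
  define v' where "v' = v @ drop a (take j w)"
  define s where "s = drop j w"
  have "take j w = take a w @ drop a (take j w)"
    using a by (metis append_take_drop_id take_take min.absorb1)
  then have w_split: "w = u @ lm f @ v' @ s"
    unfolding s_def v'_def using uv by (metis append_take_drop_id append.assoc)
  have "length s = l" using w by (simp add: s_def)
  moreover have "length u + N + length v' = j"
    using w_split w \<open>length s = l\<close> lm_greatest(3)[OF fV \<open>f \<noteq> 0\<close>] by simp
  ultimately have "{cmul (cmul (cmul (wvec u) f) (wvec v')) (wvec s)} \<subseteq> tens (IR N R j) (Vpow l)"
    using shifted_relation_in_IR_tens[OF f] by blast
  then show ?thesis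
    using shifted_lead_word[OF fV \<open>f \<noteq> 0\<close>, of u v' s] w_split
    unfolding lead_words_def by blast
qed


subsection \<open>Restriction to words with normal prefix\<close>

lemma nf_normal:
  assumes "normal_elem R g"
  shows "nf R g = g"
proof -
  have "h = g" if "(reduction_step R)\<^sup>*\<^sup>* g h" for h
    using that
  proof (induction rule: rtranclp_induct)
    case (step h h')
    then obtain u f v where "f \<in> R"
      and h': "h' = g - smul (g (u @ lm f @ v)) (cmul (cmul (wvec u) f) (wvec v))"
      unfolding reduction_step_def by blast
    then have "g (u @ lm f @ v) = 0"
      using assms unfolding normal_elem_def normal_word_def by blast
    then show ?case using h' by (simp add: smul_zero_left)
  qed simp
  then show ?thesis
    unfolding nf_def using assms by (intro the_equality) auto
qed

definition restrict_words :: "('x list \<Rightarrow> bool) \<Rightarrow> ('x, 'k::field) vec \<Rightarrow> ('x, 'k) vec" where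
  "restrict_words Q y = (\<lambda>w. if Q w then y w else 0)"

lemma restrict_words_linear:
  "restrict_words Q 0 = 0"
  "restrict_words Q (x + y) = restrict_words Q x + restrict_words Q y"
  "restrict_words Q (smul c x) = smul c (restrict_words Q x)"
  by (simp_all add: restrict_words_def fun_eq_iff fun_arith_apply smul_apply)

lemma restrict_words_Vpow: "(x::('x::finite, 'k::field) vec) \<in> Vpow a \<Longrightarrow> restrict_words Q x \<in> Vpow a"
  by (auto simp: Vpow_iff_supp_on supp_on_def restrict_words_def)

lemma restrict_prefix_cmul:
  assumes x: "(x::('x::finite, 'k::field) vec) \<in> Vpow a"
  shows "restrict_words (\<lambda>w. P (take a w)) (cmul x y) = cmul (restrict_words P x) y"
proof
  fix w
  have "(if P (take a w) then x (take i w) else 0) = restrict_words P x (take i w)"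
    if "i \<le> length w" for i
    using that Vpow_outside[OF x, of "take i w"] by (cases "i = a") (auto simp: restrict_words_def)
  then show "restrict_words (\<lambda>w. P (take a w)) (cmul x y) w = cmul (restrict_words P x) y w"
    unfolding restrict_words_def cmul_def by (auto simp: sum_distrib_right intro!: sum.cong)
qed

lemma restrict_prefix_tens:
  assumes y: "(y::('x::finite, 'k::field) vec) \<in> tens (Vpow a) B"
  shows "restrict_words (\<lambda>w. P (take a w)) y \<in> tens (restrict_words P ` Vpow a) B"
proof -
  let ?D = "{y. restrict_words (\<lambda>w. P (take a w)) y \<in> tens (restrict_words P ` Vpow a) B}"
  have "lin_closed ?D"
    using lin_closedD[OF lin_closed_span[of "{cmul x b |x b. x \<in> restrict_words P ` Vpow a \<and> b \<in> B}"]]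
    unfolding lin_closed_def tens_def by (simp add: restrict_words_linear)
  moreover have "{cmul x b |x b. x \<in> Vpow a \<and> b \<in> B} \<subseteq> ?D"
    by (auto simp: restrict_prefix_cmul intro!: tens_base imageI)
  ultimately have "tens (Vpow a) B \<subseteq> ?D"
    unfolding tens_def by (rule span_subset_lin_closed)
  then show ?thesis using y by blast
qed

lemma restrict_normal_in_nf_image:
  assumes "(x::('x::{finite,linorder}, 'k::field) vec) \<in> Vpow a"
  shows "restrict_words (normal_word R) x \<in> nf R ` TV"
proof -
  have n: "normal_elem R (restrict_words (normal_word R) x)"
    by (auto simp: normal_elem_def restrict_words_def split: if_splits)
  have "finite {w. restrict_words (normal_word R) x w \<noteq> 0}"
    by (rule finite_subset[OF _ Vpow_finite_support[OF assms]]) (auto simp: restrict_words_def split: if_splits)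
  then have "restrict_words (normal_word R) x \<in> TV" by (simp add: TV_def)
  then show ?thesis using nf_normal[OF n] by (metis image_eqI)
qed

text \<open>The part of A - std_proj A on words with non-normal prefix lies in W, and it vanishes on
the leading words of W because both A and std_proj A do; so it is 0.\<close>
lemma std_proj_residue_in_nf_tens:
  fixes A :: "('x::{finite,linorder}, 'k::field) vec"
  assumes W: "homog_subspace m (tens (Vpow a) B)" and A: "A \<in> Vpow m"
    and A_normal: "\<And>w. \<not> normal_word R (take a w) \<Longrightarrow> A w = 0"
  shows "A - std_proj m (tens (Vpow a) B) A \<in> tens (nf R ` TV) B"
proof -
  let ?W = "tens (Vpow a) B"
  define \<gamma> where "\<gamma> = A - std_proj m ?W A"
  define r where "r = restrict_words (\<lambda>w. \<not> normal_word R (take a w)) \<gamma>"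
  have \<gamma>W: "\<gamma> \<in> ?W" and PA: "std_proj m ?W A \<in> std_span m ?W"
    using std_proj_mem_Vpow[OF W A] by (simp_all add: \<gamma>_def)
  have "r \<in> tens (restrict_words (\<lambda>w. \<not> normal_word R w) ` Vpow a) B"
    unfolding r_def using \<gamma>W by (rule restrict_prefix_tens)
  also have "\<dots> \<subseteq> ?W" by (rule tens_mono_left) (auto intro: restrict_words_Vpow)
  finally have rW: "r \<in> ?W" .
  have "r \<in> std_span m ?W"
    unfolding std_span_def
  proof (intro CollectI conjI ballI)
    show "r \<in> Vpow m" using rW W by (auto simp: homog_subspace_def)
    fix u assume "u \<in> lead_words ?W"
    then have "std_proj m ?W A u = 0" using PA by (simp add: std_span_def)
    then show "r u = 0" using A_normal[of u] by (simp add: r_def restrict_words_def \<gamma>_def fun_arith_apply)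
  qed
  then have "r = 0" using std_span_inter_zero[OF W rW] by blast
  then have "\<gamma> = restrict_words (\<lambda>w. normal_word R (take a w)) \<gamma>"
    by (auto simp: fun_eq_iff r_def restrict_words_def fun_arith_apply split: if_splits)
  also have "\<dots> \<in> tens (restrict_words (normal_word R) ` Vpow a) B"
    using \<gamma>W by (rule restrict_prefix_tens)
  also have "\<dots> \<subseteq> tens (nf R ` TV) B"
    by (rule tens_mono_left) (auto intro: restrict_normal_in_nf_image)
  finally show ?thesis unfolding \<gamma>_def .
qed


subsection \<open>The operators F1 and F2\<close>

lemma Rbar_subset_Vpow: "reduced_pres N R \<Longrightarrow> Rbar R \<subseteq> (Vpow N :: ('x::{finite,linorder}, 'k::field) vec set)"
  unfolding Rbar_def reduced_pres_def by (intro span_subset_Vpow) blast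

lemma IR_subset_Vpow:
  assumes red: "reduced_pres N (R::('x::{finite,linorder}, 'k::field) vec set)"
  shows "IR N R j \<subseteq> Vpow j"
proof (cases "j < N")
  case True
  then show ?thesis by (simp add: IR_def Vpow_zero)
next
  case False
  have H: "tens (tens (Vpow i) (Rbar R)) (Vpow (j - N - i)) \<subseteq> Vpow j" if "i \<le> j - N" for i
    using tens_subset_Vpow[OF tens_subset_Vpow[OF order.refl Rbar_subset_Vpow[OF red]] order.refl]
      that False by fastforce
  then show ?thesis
    unfolding IR_def if_not_P[OF False] by (intro span_subset_Vpow UN_least) (simp add: H)
qed

lemma lN_mono_Suc: "N \<ge> 1 \<Longrightarrow> lN N n \<le> lN N (n + 1)"
  by (cases "even n") (auto simp: lN_def elim: oddE)

lemma J_subset_Vpow: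
  assumes red: "reduced_pres N (R::('x::{finite,linorder}, 'k::field) vec set)" and n: "n \<ge> 1"
  shows "J N R n \<subseteq> Vpow (lN N n)"
proof -
  consider "n = 1" | "n = 2" | "n \<ge> 3" using n by linarith
  then show ?thesis
  proof cases
    case 1
    then show ?thesis by (simp add: J_def lN_def)
  next
    case 2
    then show ?thesis using Rbar_subset_Vpow[OF red] by (simp add: J_def lN_def)
  next
    case 3
    have "1 \<le> n div 2" using 3 by simp
    then have "N \<le> (n div 2) * N" by (metis mult_le_mono1 mult_1)
    moreover have "(n div 2) * N \<le> lN N n" by (simp add: lN_def)
    ultimately have "N \<le> lN N n" by linarith
    have "J N R n \<subseteq> tens (tens (Vpow 0) (Rbar R)) (Vpow (lN N n - N - 0))"
    proof
      fix x assume "x \<in> J N R n"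
      then have "\<forall>i\<in>{0..lN N n - N}. x \<in> tens (tens (Vpow i) (Rbar R)) (Vpow (lN N n - N - i))"
        using 3 unfolding J_def by simp
      then show "x \<in> tens (tens (Vpow 0) (Rbar R)) (Vpow (lN N n - N - 0))" by (rule bspec) simp
    qed
    also have "\<dots> \<subseteq> Vpow (0 + N + (lN N n - N - 0))"
      by (intro tens_subset_Vpow Rbar_subset_Vpow[OF red]) simp_all
    finally show ?thesis using \<open>N \<le> lN N n\<close> by simp
  qed
qed

lemma alt_outermost: "0 < k \<Longrightarrow> \<exists>y. alt t s k x = (if odd k then s else t) y"
proof (induction k arbitrary: t s x)
  case (Suc k)
  then show ?case by (cases "k = 0") (auto dest: Suc.IH[of s t "s x"])
qed simp

lemma gamma1_in_nf_tens_J: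
  fixes R :: "('x::{finite,linorder}, 'k::field) vec set"
  assumes red: "reduced_pres N R" and N: "N \<ge> 1" and g: "g \<in> Vpow m" and m: "lN N n \<le> m"
  shows "gamma1 N R n m k g \<in> tens (nf R ` TV) (J N R (n + 1))"
proof (cases "m < lN N (n + 1)")
  case True
  then show ?thesis unfolding gamma1_def F2_def tens_def by (simp add: Let_def span_zero)
next
  case False
  define a where "a = m - lN N (n + 1)"
  define W1 where "W1 = tens (IR N R (m - lN N n)) (Vpow (lN N n))"
  define W2 where "W2 = tens (Vpow a) (J N R (n + 1))"
  have "homog_subspace (m - lN N n + lN N n) W1"
    unfolding W1_def by (rule homog_subspace_tens[OF IR_subset_Vpow[OF red]]) simp
  then have W1: "homog_subspace m W1" using m by simp
  have "homog_subspace (a + lN N (n + 1)) W2"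
    unfolding W2_def by (rule homog_subspace_tens[OF _ J_subset_Vpow[OF red]]) simp_all
  then have W2: "homog_subspace m W2" using False by (simp add: a_def)
  have F1: "F1 N R n m = std_proj m W1"
    using theta_inv_eq_std_proj[OF W1] by (simp add: F1_def W1_def)
  have F2: "F2 N R n m = std_proj m W2"
    using theta_inv_eq_std_proj[OF W2] False by (simp add: F2_def W2_def a_def)
  define A where "A = (\<Sum>i\<in>{i. odd i \<and> 1 \<le> i \<and> i \<le> k - 1}. alt (std_proj m W2) (std_proj m W1) i g)"
  have "A \<in> std_span m W1"
    unfolding A_def
  proof (intro lin_closed_sum[OF lin_closed_std_span])
    fix i assume "i \<in> {i. odd i \<and> 1 \<le> i \<and> i \<le> k - 1}"
    then obtain y where "alt (std_proj m W2) (std_proj m W1) i g = std_proj m W1 y"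
      using alt_outermost[of i "std_proj m W2" "std_proj m W1" g] by auto
    then show "alt (std_proj m W2) (std_proj m W1) i g \<in> std_span m W1"
      using std_proj_mem(1)[OF W1] by simp
  qed
  moreover have "w \<in> lead_words W1" if "\<not> normal_word R (take a w)" "length w = m" for w
    unfolding W1_def using that lN_mono_Suc[OF N, of n] m False
    by (intro nonnormal_prefix_lead_word[OF red]) (simp_all add: a_def)
  ultimately have "A - std_proj m W2 A \<in> tens (nf R ` TV) (J N R (n + 1))"
    unfolding W2_def using W2
    by (intro std_proj_residue_in_nf_tens) (auto simp: W2_def std_span_def intro: Vpow_outside)
  then show ?thesis by (simp add: gamma1_def Let_def F1 F2 A_def)
qed

theorem lemma4p2p2:
  fixes N :: nat and R :: "('x::{finite,linorder}, 'k::field) vec set"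
    and n :: nat and ks :: "nat \<Rightarrow> nat"
  assumes "N \<ge> 2"
    and "reduced_pres N R"
    and "side_confluent N R"
    and "\<forall>m \<ge> lN N n. \<forall>g\<in>Vpow m.
           alt (F1 N R n m) (F2 N R n m) (ks m) g = alt (F2 N R n m) (F1 N R n m) (ks m) g"
  shows "h' N R n ks ` {f \<in> TV. \<forall>w. f w \<noteq> 0 \<longrightarrow> lN N n \<le> length w}
           \<subseteq> tens (nf R ` TV) (J N R (n + 1))"
proof (clarify)
  fix f :: "('x, 'k) vec"
  have "gamma1 N R n m (ks m) (deg_comp m f) \<in> tens (nf R ` TV) (J N R (n + 1))" if "lN N n \<le> m" for m
    using assms(1) that by (intro gamma1_in_nf_tens_J[OF assms(2)] deg_comp_in_Vpow) simp_all
  then show "h' N R n ks f \<in> tens (nf R ` TV) (J N R (n + 1))"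
    unfolding h'_def tens_def by (intro span_sum) (simp add: tens_def)
qed

end
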